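(* Let $G$ be a flag with vertices $v_1,\dots,v_n$ ordered by increasing $x$-coordinate, and let $0<i_1<i_2<i_3<i_4\le n$ with $v_{i_3},v_{i_4}$ both below the edge $v_{i_1}v_{i_2}$. Then the following are equivalent: (1) $v_{i_1}v_{i_2}$ and $v_{i_3}v_{i_4}$ cross; (2) $(v_{i_1}v_{i_2})^+$ and $(v_{i_3}v_{i_4})^-$ cross; (3) $v_{i_2}$ is below $v_{i_3}v_{i_4}$, $v_{i_1}$ is above $v_{i_3}v_{i_4}$, and $(v_{i_3}v_{i_4})^-\prec(v_{i_1}v_{i_2})^-$. Moreover, $v_{i_1}v_{i_2}$ and $v_{i_3}v_{i_4}$ are disjoint if and only if $v_{i_1},v_{i_2}$ are both above $v_{i_3}v_{i_4}$. Symmetrically, if instead $v_{i_3},v_{i_4}$ are both above $v_{i_1}v_{i_2}$, then the following are equivalent: (1) the two edges cross; (2) $(v_{i_1}v_{i_2})^+$ and $(v_{i_3}v_{i_4})^-$ cross; (3) $v_{i_2}$ is above $v_{i_3}v_{i_4}$, $v_{i_1}$ is below $v_{i_3}v_{i_4}$, and $(v_{i_1}v_{i_2})^-\prec(v_{i_3}v_{i_4})^-$; and the two edges are disjoint if and only if $v_{i_1},v_{i_2}$ are both below $v_{i_3}v_{i_4}$.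
   Context: Let $\mathcal C=S^1\times\mathbb R$ ($S^1=[0,1]$ with $0\sim1$), points $p=(p_x,p_y)$ with $0\le p_x<1$. A flag is a graph drawn on $\mathcal C$ (vertices distinct points, edges Jordan arcs, no overlapping edges, no edge through a vertex) that is complete, simple (any two edges meet in at most one point: a common endpoint or a proper crossing), monotone (every edge meets each vertical line $l_{x=a}=\{p:p_x=a\}$ at most once, no two vertices share an $x$-coordinate, no vertex has $x$-coordinate $0$), and such that $l_{x=0}$ meets every edge in its relative interior. For an edge $e=vw$ of a flag with $v_x<w_x$, $e^-$ is the part of $e$ consisting of points with $x$-coordinate smaller than $v_x$ and $e^+$ the part consisting of points with $x$-coordinate greater than $w_x$. A point $v$ is related to an $x$-monotone curve $e$ if $l_{x=v_x}$ meets $e$ in its relative interior; then $v$ is below (above) $e$ if $v_y$ is smaller (larger) than the $y$-coordinate of $l_{x=v_x}\cap e$. Two $x$-monotone curves $e,f$ are related if they do not cross, some vertical line meets both relative interiors, and all such lines meet them in the same vertical order; then $e\prec f$ means that on every vertical line meeting both relative interiors, $e$'s point has $y$-coordinate at most that of $f$'s point. Two edges are disjoint if they share no point. *)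

theory Defs
  imports "HOL-Analysis.Analysis"
begin

text \<open>
Cylinder C = S^1 x R, points (x,y) with 0 <= x < 1.  A real t is sent to the
point of S^1 with x-coordinate frac t.  An x-monotone Jordan arc on C is the
graph of a continuous function over an arc of S^1; we represent it by an
"unrolled" parameter interval [a,b] (with b - a < 1, so that the projection
to S^1 is injective) and a continuous g on [a,b]; its points are
(frac t, g t) for a <= t <= b.
\<close>

type_synonym point = "real \<times> real"
type_synonym edge = "real \<times> real \<times> (real \<Rightarrow> real)"

definition e_lo :: "edge \<Rightarrow> real" where "e_lo e = fst e"
definition e_hi :: "edge \<Rightarrow> real" where "e_hi e = fst (snd e)"
definition e_fun :: "edge \<Rightarrow> real \<Rightarrow> real" where "e_fun e = snd (snd e)"

definition edge_pts :: "edge \<Rightarrow> point set" where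
  "edge_pts e = {(frac t, e_fun e t) | t. e_lo e \<le> t \<and> t \<le> e_hi e}"

definition edge_relint :: "edge \<Rightarrow> point set" where
  "edge_relint e = {(frac t, e_fun e t) | t. e_lo e < t \<and> t < e_hi e}"

definition edge_y :: "edge \<Rightarrow> real \<Rightarrow> real" where
  "edge_y e x = e_fun e (THE t. e_lo e \<le> t \<and> t \<le> e_hi e \<and> frac t = frac x)"

definition monotone_arc :: "edge \<Rightarrow> point \<Rightarrow> point \<Rightarrow> bool" where
  "monotone_arc e v w \<longleftrightarrow> e_lo e < e_hi e \<and> e_hi e - e_lo e < 1 \<and>
     continuous_on {e_lo e..e_hi e} (e_fun e) \<and>
     {(frac (e_lo e), e_fun e (e_lo e)), (frac (e_hi e), e_fun e (e_hi e))} = {v, w}"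

text \<open>The line l_{x=0} meets the relative interior of the edge.\<close>
definition meets_zero_line :: "edge \<Rightarrow> bool" where
  "meets_zero_line e \<longleftrightarrow> (\<exists>k::int. e_lo e < of_int k \<and> of_int k < e_hi e)"

definition proper_cross :: "edge \<Rightarrow> edge \<Rightarrow> point \<Rightarrow> bool" where
  "proper_cross e f p \<longleftrightarrow> p \<in> edge_relint e \<and> p \<in> edge_relint f \<and>
     (\<exists>\<delta>>0.
        (\<forall>s. 0 < s \<and> s < \<delta> \<longrightarrow>
            edge_y e (fst p - s) < edge_y f (fst p - s) \<and> edge_y f (fst p + s) < edge_y e (fst p + s)) \<or>
        (\<forall>s. 0 < s \<and> s < \<delta> \<longrightarrow>
            edge_y f (fst p - s) < edge_y e (fst p - s) \<and> edge_y e (fst p + s) < edge_y f (fst p + s)))"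

definition edges_cross :: "edge \<Rightarrow> edge \<Rightarrow> bool" where
  "edges_cross e f \<longleftrightarrow> (\<exists>p. proper_cross e f p)"

definition edges_disjoint :: "edge \<Rightarrow> edge \<Rightarrow> bool" where
  "edges_disjoint e f \<longleftrightarrow> edge_pts e \<inter> edge_pts f = {}"

definition pt_below :: "point \<Rightarrow> edge \<Rightarrow> bool" where
  "pt_below p e \<longleftrightarrow> (\<exists>t. e_lo e < t \<and> t < e_hi e \<and> frac t = fst p \<and> snd p < e_fun e t)"

definition pt_above :: "point \<Rightarrow> edge \<Rightarrow> bool" where
  "pt_above p e \<longleftrightarrow> (\<exists>t. e_lo e < t \<and> t < e_hi e \<and> frac t = fst p \<and> e_fun e t < snd p)"

definition is_flag :: "nat \<Rightarrow> (nat \<Rightarrow> point) \<Rightarrow> (nat \<Rightarrow> nat \<Rightarrow> edge) \<Rightarrow> bool" where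
  "is_flag n v E \<longleftrightarrow>
     (\<forall>i\<in>{1..n}. 0 < fst (v i) \<and> fst (v i) < 1) \<and>
     (\<forall>i j. 1 \<le> i \<and> i < j \<and> j \<le> n \<longrightarrow> fst (v i) < fst (v j)) \<and>
     (\<forall>i j. 1 \<le> i \<and> i < j \<and> j \<le> n \<longrightarrow> monotone_arc (E i j) (v i) (v j) \<and> meets_zero_line (E i j)) \<and>
     (\<forall>i j k. 1 \<le> i \<and> i < j \<and> j \<le> n \<and> k \<in> {1..n} \<and> k \<noteq> i \<and> k \<noteq> j \<longrightarrow> v k \<notin> edge_pts (E i j)) \<and>
     (\<forall>i j k l. 1 \<le> i \<and> i < j \<and> j \<le> n \<and> 1 \<le> k \<and> k < l \<and> l \<le> n \<and> (i, j) \<noteq> (k, l) \<longrightarrow>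
        (\<forall>p\<in>edge_pts (E i j) \<inter> edge_pts (E k l). \<forall>q\<in>edge_pts (E i j) \<inter> edge_pts (E k l). p = q) \<and>
        (\<forall>p\<in>edge_pts (E i j) \<inter> edge_pts (E k l).
            p \<in> {v i, v j} \<inter> {v k, v l} \<or> proper_cross (E i j) (E k l) p))"

text \<open>Sub-curves of edges: a parent edge, the set of x-coordinates of its points, and
the set of x-coordinates of its relative interior.\<close>
type_synonym curve = "edge \<times> real set \<times> real set"

definition curve_pts :: "curve \<Rightarrow> point set" where
  "curve_pts c = {p \<in> edge_pts (fst c). fst p \<in> fst (snd c)}"

definition curve_rixs :: "curve \<Rightarrow> real set" where
  "curve_rixs c = snd (snd c)"

text \<open>For the edge e = vw with v_x < w_x: e^- consists of the points with x-coordinate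
in [0, v_x) (relative interior: x in (0, v_x)); e^+ of the points with x in (w_x, 1).\<close>
definition minus_part :: "edge \<Rightarrow> point \<Rightarrow> curve" where
  "minus_part e v = (e, {0..<fst v}, {0<..<fst v})"

definition plus_part :: "edge \<Rightarrow> point \<Rightarrow> curve" where
  "plus_part e w = (e, {fst w<..<1}, {fst w<..<1})"

definition curves_cross :: "curve \<Rightarrow> curve \<Rightarrow> bool" where
  "curves_cross c d \<longleftrightarrow>
     (\<exists>p. p \<in> curve_pts c \<and> p \<in> curve_pts d \<and> proper_cross (fst c) (fst d) p)"

definition curves_related :: "curve \<Rightarrow> curve \<Rightarrow> bool" where
  "curves_related c d \<longleftrightarrow> \<not> curves_cross c d \<and>
     curve_rixs c \<inter> curve_rixs d \<noteq> {} \<and>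
     ((\<forall>x\<in>curve_rixs c \<inter> curve_rixs d. edge_y (fst c) x < edge_y (fst d) x) \<or>
      (\<forall>x\<in>curve_rixs c \<inter> curve_rixs d. edge_y (fst d) x < edge_y (fst c) x))"

definition curve_prec :: "curve \<Rightarrow> curve \<Rightarrow> bool" where
  "curve_prec c d \<longleftrightarrow> curves_related c d \<and>
     (\<forall>x\<in>curve_rixs c \<inter> curve_rixs d. edge_y (fst c) x \<le> edge_y (fst d) x)"

end

theory Submission
  imports Defs
begin

text \<open>
  Cut the cylinder along l_{x=0} and unroll it: an edge v_i v_j with i < j leaves v_j to the
  right, crosses l_{x=0} and ends at v_i, so it is the graph of a continuous function over
  [x_j, x_i + 1].  For e = v_1v_2 and f = v_3v_4 a common point lies over [x_4, x_1 + 1]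
  (around l_{x=0}) or over [x_2, x_3] (where e^+ meets f^-); there is at most one, and it is a
  sign change of the height difference.

  Suppose v_3 and v_4 are below e.  A crossing around l_{x=0} would put v_1 below f and, no
  crossing being left for [x_2, x_3], v_2 above f.  But the edge v_2v_3 starts at v_3, below e,
  and ends at v_2, above f, meeting neither on the way; so over x_1 it lies below e and above f,
  contradicting v_1 below f.  Hence f stays below e around l_{x=0}, everything happens over
  [x_2, x_3], and the intermediate value theorem decides it by the position of v_2.  The other
  case is the mirror image under y \<mapsto> -y.
\<close>

section \<open>Sign changes of continuous functions\<close>

definition crosses_zero_at :: "(real \<Rightarrow> real) \<Rightarrow> real \<Rightarrow> bool" where
  "crosses_zero_at D z \<longleftrightarrow> (\<exists>\<delta>>0. \<forall>\<sigma>. 0 < \<sigma> \<and> \<sigma> < \<delta> \<longrightarrow> D (z - \<sigma>) * D (z + \<sigma>) < 0)"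

lemma crosses_zero_at_scale:
  fixes c :: real
  assumes "c \<noteq> 0"
  shows "crosses_zero_at (\<lambda>s. c * D s) z \<longleftrightarrow> crosses_zero_at D z"
proof -
  have "(c * a) * (c * b) < 0 \<longleftrightarrow> a * b < 0" for a b :: real
  proof -
    have "(c * a) * (c * b) = c\<^sup>2 * (a * b)" by (simp add: power2_eq_square algebra_simps)
    moreover have "0 < c\<^sup>2" using assms by simp
    ultimately show ?thesis by (metis mult_less_cancel_left_pos mult_zero_right)
  qed
  then show ?thesis by (simp add: crosses_zero_at_def)
qed

lemma continuous_nonvanishing_sign_eq:
  fixes D :: "real \<Rightarrow> real"
  assumes cont: "continuous_on {l..r} D" and lr: "l \<le> r" and nz: "\<forall>s\<in>{l..r}. D s \<noteq> 0"
  shows "D l < 0 \<longleftrightarrow> D r < 0"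
  using IVT'[of D l 0 r, OF _ _ lr cont] IVT2'[of D r 0 l, OF _ _ lr cont] nz
  by (metis atLeastAtMost_iff linorder_not_less order_less_imp_le)

lemma zero_iff_opposite_signs:
  fixes D :: "real \<Rightarrow> real"
  assumes cont: "continuous_on {l..r} D" and lr: "l \<le> r" and ends: "D l \<noteq> 0" "D r \<noteq> 0"
    and unique: "\<And>z z'. z \<in> {l..r} \<Longrightarrow> z' \<in> {l..r} \<Longrightarrow> D z = 0 \<Longrightarrow> D z' = 0 \<Longrightarrow> z = z'"
    and crosses: "\<And>z. z \<in> {l..r} \<Longrightarrow> D z = 0 \<Longrightarrow> crosses_zero_at D z"
  shows "(\<exists>z\<in>{l..r}. D z = 0) \<longleftrightarrow> (D l < 0 \<longleftrightarrow> 0 < D r)"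
proof
  assume "\<exists>z\<in>{l..r}. D z = 0"
  then obtain z where z: "z \<in> {l..r}" "D z = 0" by blast
  then have lz: "l < z" and zr: "z < r" using ends by (auto simp: order.order_iff_strict)
  obtain \<delta> where "\<delta> > 0" and \<delta>: "\<forall>\<sigma>. 0 < \<sigma> \<and> \<sigma> < \<delta> \<longrightarrow> D (z - \<sigma>) * D (z + \<sigma>) < 0"
    using crosses[OF z] by (auto simp: crosses_zero_at_def)
  define \<sigma> where "\<sigma> = min \<delta> (min (z - l) (r - z)) / 2"
  have \<sigma>: "0 < \<sigma>" "\<sigma> < \<delta>" "\<sigma> < z - l" "\<sigma> < r - z"
    using \<open>\<delta> > 0\<close> lz zr by (auto simp: \<sigma>_def)
  have only_z: "D s \<noteq> 0" if "s \<in> {l..r}" "s \<noteq> z" for s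
    using unique[OF that(1) z(1)] z(2) that(2) by blast
  have "D l < 0 \<longleftrightarrow> D (z - \<sigma>) < 0"
    using continuous_nonvanishing_sign_eq[OF continuous_on_subset[OF cont]] \<sigma> only_z z by auto
  moreover have "D (z + \<sigma>) < 0 \<longleftrightarrow> D r < 0"
    using continuous_nonvanishing_sign_eq[OF continuous_on_subset[OF cont]] \<sigma> only_z z by auto
  moreover have "D (z - \<sigma>) * D (z + \<sigma>) < 0" using \<delta> \<sigma> by blast
  ultimately show "D l < 0 \<longleftrightarrow> 0 < D r"
    using ends by (auto simp: mult_less_0_iff)
next
  assume "D l < 0 \<longleftrightarrow> 0 < D r"
  then have "D l \<le> 0 \<and> 0 \<le> D r \<or> D r \<le> 0 \<and> 0 \<le> D l" by auto
  then show "\<exists>z\<in>{l..r}. D z = 0"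
    using IVT'[of D l 0 r, OF _ _ lr cont] IVT2'[of D r 0 l, OF _ _ lr cont] by fastforce
qed

lemma bridge_arc_order:
  fixes x1 x2 x3 :: real and E F G :: "real \<Rightarrow> real"
  assumes x: "x1 < x2" "x3 \<le> x1 + 1"
    and cont: "continuous_on {x3..x1+1} E" "continuous_on {x1+1..x2+1} F" "continuous_on {x3..x2+1} G"
    and G_ends: "G x3 = F (x3+1)" "G (x2+1) = E x2"
    and G_avoids: "\<forall>s\<in>{x3..x1+1}. G s \<noteq> E s" "\<forall>s\<in>{x1+1..x2+1}. G s \<noteq> F s"
    and orders: "F (x3+1) < E x3" "F (x2+1) < E x2"
  shows "F (x1+1) < E (x1+1)"
proof -
  have "continuous_on {x3..x1+1} (\<lambda>s. G s - E s)"
    by (intro continuous_on_diff continuous_on_subset[OF cont(3)] cont(1)) (use x in auto)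
  then have "G x3 - E x3 < 0 \<longleftrightarrow> G (x1+1) - E (x1+1) < 0"
    by (rule continuous_nonvanishing_sign_eq) (use x G_avoids(1) in auto)
  then have "G (x1+1) < E (x1+1)" using G_ends(1) orders(1) by simp
  have "continuous_on {x1+1..x2+1} (\<lambda>s. G s - F s)"
    by (intro continuous_on_diff continuous_on_subset[OF cont(3)] cont(2)) (use x in auto)
  then have "G (x1+1) - F (x1+1) < 0 \<longleftrightarrow> G (x2+1) - F (x2+1) < 0"
    by (rule continuous_nonvanishing_sign_eq) (use x G_avoids(2) in auto)
  moreover have "G (x1+1) \<noteq> F (x1+1)" using G_avoids(2) x by auto
  ultimately have "F (x1+1) < G (x1+1)" using G_ends(2) orders(2) by auto
  with \<open>G (x1+1) < E (x1+1)\<close> show ?thesis by linarith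
qed

text \<open>E, F and G stand for the unrolled edges v_1v_2, v_3v_4 and v_2v_3.\<close>
lemma wrapped_arcs_order:
  fixes x1 x2 x3 x4 :: real and E F G :: "real \<Rightarrow> real"
  assumes x: "x1 < x2" "x2 < x3" "x3 < x4" "x4 < x1 + 1"
    and cont: "continuous_on {x2..x1+1} E" "continuous_on {x4..x3+1} F" "continuous_on {x3..x2+1} G"
    and unique: "\<And>s s'. s \<in> {x4..x1+1} \<and> F s = E s \<or> s \<in> {x2..x3} \<and> F (s+1) = E s \<Longrightarrow>
                         s' \<in> {x4..x1+1} \<and> F s' = E s' \<or> s' \<in> {x2..x3} \<and> F (s'+1) = E s' \<Longrightarrow> s = s'"
    and crosses: "\<And>s. s \<in> {x4..x1+1} \<Longrightarrow> F s = E s \<Longrightarrow> crosses_zero_at (\<lambda>t. F t - E t) s"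
                 "\<And>s. s \<in> {x2..x3} \<Longrightarrow> F (s+1) = E s \<Longrightarrow> crosses_zero_at (\<lambda>t. F (t+1) - E t) s"
    and ends: "F x4 \<noteq> E x4" "F (x1+1) \<noteq> E (x1+1)" "F (x2+1) \<noteq> E x2" "F (x3+1) \<noteq> E x3"
    and G_ends: "G x3 = F (x3+1)" "G (x2+1) = E x2"
    and G_avoids: "\<forall>s\<in>{x3..x1+1}. G s \<noteq> E s" "\<forall>s\<in>{x4..x2+1}. G s \<noteq> F s"
    and below: "F x4 < E x4" "F (x3+1) < E x3"
  shows "\<forall>s\<in>{x4..x1+1}. F s < E s"
    and "(\<exists>s\<in>{x2..x3}. F (s+1) = E s) \<longleftrightarrow> E x2 < F (x2+1)"
proof -
  have cont_A: "continuous_on {x4..x1+1} (\<lambda>s. F s - E s)"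
    by (intro continuous_on_diff continuous_on_subset[OF cont(2)] continuous_on_subset[OF cont(1)])
      (use x in auto)
  have "continuous_on {x2..x3} (\<lambda>s. F (s+1))"
    by (rule continuous_on_compose2[OF cont(2)]) (use x in \<open>auto intro!: continuous_intros\<close>)
  then have cont_B: "continuous_on {x2..x3} (\<lambda>s. F (s+1) - E s)"
    by (intro continuous_on_diff continuous_on_subset[OF cont(1)]) (use x in auto)
  have "(\<exists>z\<in>{x4..x1+1}. F z - E z = 0) \<longleftrightarrow> (F x4 - E x4 < 0 \<longleftrightarrow> 0 < F (x1+1) - E (x1+1))"
  proof (rule zero_iff_opposite_signs[OF cont_A])
    show "z = z'" if "z \<in> {x4..x1+1}" "z' \<in> {x4..x1+1}" "F z - E z = 0" "F z' - E z' = 0" for z z'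
      using unique[of z z'] that by simp
    show "crosses_zero_at (\<lambda>s. F s - E s) z" if "z \<in> {x4..x1+1}" "F z - E z = 0" for z
      using crosses(1)[of z] that by simp
  qed (use x ends in auto)
  then have meet_A_iff: "(\<exists>z\<in>{x4..x1+1}. F z = E z) \<longleftrightarrow> E (x1+1) < F (x1+1)"
    using below by simp
  have "(\<exists>z\<in>{x2..x3}. F (z+1) - E z = 0) \<longleftrightarrow> (F (x2+1) - E x2 < 0 \<longleftrightarrow> 0 < F (x3+1) - E x3)"
  proof (rule zero_iff_opposite_signs[OF cont_B])
    show "z = z'" if "z \<in> {x2..x3}" "z' \<in> {x2..x3}" "F (z+1) - E z = 0" "F (z'+1) - E z' = 0" for z z'
      using unique[of z z'] that by simp
    show "crosses_zero_at (\<lambda>s. F (s+1) - E s) z" if "z \<in> {x2..x3}" "F (z+1) - E z = 0" for z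
      using crosses(2)[of z] that by simp
  qed (use x ends in auto)
  then have meet_B_iff: "(\<exists>z\<in>{x2..x3}. F (z+1) = E z) \<longleftrightarrow> E x2 < F (x2+1)"
    using below ends by auto
  have no_meet_A: "\<forall>z\<in>{x4..x1+1}. F z \<noteq> E z"
  proof (rule ccontr)
    assume "\<not> (\<forall>z\<in>{x4..x1+1}. F z \<noteq> E z)"
    then obtain z where z: "z \<in> {x4..x1+1}" "F z = E z" by blast
    have "z' = z" if "z' \<in> {x2..x3}" "F (z'+1) = E z'" for z'
      using unique[of z' z] that z by blast
    then have "\<not> (\<exists>z'\<in>{x2..x3}. F (z'+1) = E z')" using z x by force
    then have "F (x2+1) < E x2" using meet_B_iff ends(3) by auto
    moreover have "continuous_on {x3..x1+1} E" "continuous_on {x1+1..x2+1} F"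
      by (rule continuous_on_subset[OF cont(1)] continuous_on_subset[OF cont(2)]; use x in auto)+
    ultimately have "F (x1+1) < E (x1+1)"
      using bridge_arc_order[of x1 x2 x3 E F G] x cont(3) G_ends G_avoids below(2) by auto
    with z meet_A_iff show False by auto
  qed
  show "\<forall>s\<in>{x4..x1+1}. F s < E s"
  proof
    fix s assume s: "s \<in> {x4..x1+1}"
    have "continuous_on {x4..s} (\<lambda>s. F s - E s)" using cont_A by (rule continuous_on_subset) (use s in auto)
    then have "F x4 - E x4 < 0 \<longleftrightarrow> F s - E s < 0"
      by (rule continuous_nonvanishing_sign_eq) (use no_meet_A s in auto)
    then show "F s < E s" using below by simp
  qed
  show "(\<exists>s\<in>{x2..x3}. F (s+1) = E s) \<longleftrightarrow> E x2 < F (x2+1)" by (rule meet_B_iff)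
qed

section \<open>Unrolled edges\<close>

lemma frac_eq_close_imp_eq:
  fixes s t :: real
  assumes "frac s = frac t" and "\<bar>s - t\<bar> < 1"
  shows "s = t"
proof -
  obtain k where k: "s = t + of_int k" using assms(1) by (elim frac_eqE)
  then have "\<bar>of_int k\<bar> < (1::real)" using assms(2) by simp
  then have "k = 0" by linarith
  with k show ?thesis by simp
qed

lemma edge_relint_subset: "edge_relint e \<subseteq> edge_pts e"
  unfolding edge_relint_def edge_pts_def by force

lemma edge_y_frac: "frac x = frac x' \<Longrightarrow> edge_y e x = edge_y e x'"
  by (simp add: edge_y_def)

lemma proper_cross_crosses_zero_at:
  assumes pc: "proper_cross e f p" and s: "frac s = fst p" and "0 < r"
    and near: "\<And>t. s - r < t \<Longrightarrow> t < s + r \<Longrightarrow> edge_y e t = P t \<and> edge_y f t = Q t"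
  shows "crosses_zero_at (\<lambda>t. Q t - P t) s"
proof -
  obtain \<delta> where "\<delta> > 0" and order:
    "(\<forall>\<sigma>. 0 < \<sigma> \<and> \<sigma> < \<delta> \<longrightarrow>
        edge_y e (fst p - \<sigma>) < edge_y f (fst p - \<sigma>) \<and> edge_y f (fst p + \<sigma>) < edge_y e (fst p + \<sigma>)) \<or>
     (\<forall>\<sigma>. 0 < \<sigma> \<and> \<sigma> < \<delta> \<longrightarrow>
        edge_y f (fst p - \<sigma>) < edge_y e (fst p - \<sigma>) \<and> edge_y e (fst p + \<sigma>) < edge_y f (fst p + \<sigma>))"
    using pc unfolding proper_cross_def by blast
  have shift: "edge_y h (fst p + d) = edge_y h (s + d)" for h d
    by (rule edge_y_frac) (simp add: s[symmetric])
  have near_pm: "edge_y e (fst p - \<sigma>) = P (s - \<sigma>) \<and> edge_y f (fst p - \<sigma>) = Q (s - \<sigma>) \<and>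
      edge_y e (fst p + \<sigma>) = P (s + \<sigma>) \<and> edge_y f (fst p + \<sigma>) = Q (s + \<sigma>)"
    if "0 < \<sigma>" "\<sigma> < r" for \<sigma>
    using near[of "s - \<sigma>"] near[of "s + \<sigma>"] shift[of _ "- \<sigma>"] shift[of _ \<sigma>] that by auto
  show ?thesis unfolding crosses_zero_at_def
  proof (intro exI[of _ "min \<delta> r"] conjI allI impI)
    show "0 < min \<delta> r" using \<open>\<delta> > 0\<close> \<open>0 < r\<close> by simp
    fix \<sigma> assume \<sigma>: "0 < \<sigma> \<and> \<sigma> < min \<delta> r"
    then have "edge_y e (fst p - \<sigma>) < edge_y f (fst p - \<sigma>) \<and> edge_y f (fst p + \<sigma>) < edge_y e (fst p + \<sigma>) \<or>
        edge_y f (fst p - \<sigma>) < edge_y e (fst p - \<sigma>) \<and> edge_y e (fst p + \<sigma>) < edge_y f (fst p + \<sigma>)"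
      using order by auto
    then show "(Q (s - \<sigma>) - P (s - \<sigma>)) * (Q (s + \<sigma>) - P (s + \<sigma>)) < 0"
      using near_pm[of \<sigma>] \<sigma> by (auto simp: mult_less_0_iff)
  qed
qed

text \<open>
  The parameter is shifted by an integer so that, for an edge v_i v_j of a flag, it runs over
  [x_j, x_i + 1] (see wrapping_edge); the point with parameter s has x-coordinate frac s.
\<close>
definition unrolled :: "edge \<Rightarrow> real \<Rightarrow> real" where
  "unrolled e s = e_fun e (s + of_int \<lfloor>e_lo e\<rfloor>)"

locale wrapping_edge =
  fixes e :: edge and xi xj :: real
  assumes frac_lo: "frac (e_lo e) = xj" and hi: "e_hi e = of_int \<lfloor>e_lo e\<rfloor> + xi + 1"
    and cont: "continuous_on {e_lo e..e_hi e} (e_fun e)"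
    and x_order: "0 < xi" "xi < xj" "xj < 1"
begin

lemma lo: "e_lo e = of_int \<lfloor>e_lo e\<rfloor> + xj"
  using frac_lo by (simp add: frac_def)

lemma continuous_unrolled: "continuous_on {xj..xi+1} (unrolled e)"
  unfolding unrolled_def
  by (rule continuous_on_compose2[OF cont]) (use lo hi in \<open>auto intro!: continuous_intros\<close>)

lemma edge_pts_iff: "p \<in> edge_pts e \<longleftrightarrow> (\<exists>s\<in>{xj..xi+1}. p = (frac s, unrolled e s))"
proof
  assume "p \<in> edge_pts e"
  then obtain t where "e_lo e \<le> t" "t \<le> e_hi e" "p = (frac t, e_fun e t)"
    by (auto simp: edge_pts_def)
  then show "\<exists>s\<in>{xj..xi+1}. p = (frac s, unrolled e s)"
    using lo hi frac_add_of_int_right[of "t - of_int \<lfloor>e_lo e\<rfloor>" "\<lfloor>e_lo e\<rfloor>"]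
    by (intro bexI[of _ "t - of_int \<lfloor>e_lo e\<rfloor>"]) (auto simp: unrolled_def)
next
  assume "\<exists>s\<in>{xj..xi+1}. p = (frac s, unrolled e s)"
  then obtain s where "s \<in> {xj..xi+1}" "p = (frac s, unrolled e s)" by blast
  then show "p \<in> edge_pts e" unfolding edge_pts_def
    using lo hi by (auto simp: unrolled_def intro!: exI[of _ "s + of_int \<lfloor>e_lo e\<rfloor>"])
qed

lemma param_in_edge_pts: "s \<in> {xj..xi+1} \<Longrightarrow> (frac s, unrolled e s) \<in> edge_pts e"
  using edge_pts_iff by blast

lemma param_unique:
  assumes "e_lo e \<le> t" "t \<le> e_hi e" "s \<in> {xj..xi+1}" "frac t = frac s"
  shows "t = s + of_int \<lfloor>e_lo e\<rfloor>"
  by (rule frac_eq_close_imp_eq) (use assms lo hi x_order in auto)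

lemma edge_y_eq: "s \<in> {xj..xi+1} \<Longrightarrow> frac s = frac x \<Longrightarrow> edge_y e x = unrolled e s"
  unfolding edge_y_def unrolled_def
  by (rule arg_cong[where f = "e_fun e"], rule the_equality)
    (use param_unique lo hi in auto)

lemma related_point_iff:
  assumes s: "s \<in> {xj<..<xi+1}" "frac s = fst p"
  shows "(\<exists>t. e_lo e < t \<and> t < e_hi e \<and> frac t = fst p \<and> R (e_fun e t)) \<longleftrightarrow> R (unrolled e s)"
proof
  assume "\<exists>t. e_lo e < t \<and> t < e_hi e \<and> frac t = fst p \<and> R (e_fun e t)"
  then obtain t where t: "e_lo e < t" "t < e_hi e" "frac t = fst p" "R (e_fun e t)" by blast
  then have "t = s + of_int \<lfloor>e_lo e\<rfloor>" using s by (intro param_unique) auto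
  with t show "R (unrolled e s)" by (simp add: unrolled_def)
next
  assume "R (unrolled e s)"
  then show "\<exists>t. e_lo e < t \<and> t < e_hi e \<and> frac t = fst p \<and> R (e_fun e t)"
    using s lo hi by (auto simp: unrolled_def intro!: exI[of _ "s + of_int \<lfloor>e_lo e\<rfloor>"])
qed

lemma pt_below_iff: "s \<in> {xj<..<xi+1} \<Longrightarrow> frac s = fst p \<Longrightarrow> pt_below p e \<longleftrightarrow> snd p < unrolled e s"
  unfolding pt_below_def by (rule related_point_iff)

lemma pt_above_iff: "s \<in> {xj<..<xi+1} \<Longrightarrow> frac s = fst p \<Longrightarrow> pt_above p e \<longleftrightarrow> unrolled e s < snd p"
  unfolding pt_above_def by (rule related_point_iff)

end

section \<open>Two edges of a flag with disjoint index pairs\<close>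

lemma flag_x_range:
  assumes "is_flag n v E" "i \<in> {1..n}"
  shows "0 < fst (v i)" "fst (v i) < 1"
  using assms(1)[unfolded is_flag_def, THEN conjunct1] assms(2) by auto

lemma flag_x_strict_mono:
  assumes "is_flag n v E" "1 \<le> i" "i < j" "j \<le> n"
  shows "fst (v i) < fst (v j)"
  using assms(1)[unfolded is_flag_def, THEN conjunct2, THEN conjunct1] assms(2-) by auto

lemma flag_edge_arc:
  assumes "is_flag n v E" "1 \<le> i" "i < j" "j \<le> n"
  shows "monotone_arc (E i j) (v i) (v j)" "meets_zero_line (E i j)"
  using assms(1)[unfolded is_flag_def, THEN conjunct2, THEN conjunct2, THEN conjunct1] assms(2-)
  by auto

lemma flag_vertex_not_on_edge:
  assumes "is_flag n v E" "1 \<le> i" "i < j" "j \<le> n" "k \<in> {1..n}" "k \<noteq> i" "k \<noteq> j"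
  shows "v k \<notin> edge_pts (E i j)"
  using assms(1)[unfolded is_flag_def, THEN conjunct2, THEN conjunct2, THEN conjunct2, THEN conjunct1,
      rule_format, of i j k] assms(2-)
  by auto

lemma flag_edges_meet_at_most_once:
  assumes "is_flag n v E" "1 \<le> i" "i < j" "j \<le> n" "1 \<le> k" "k < l" "l \<le> n" "(i, j) \<noteq> (k, l)"
    and "p \<in> edge_pts (E i j)" "p \<in> edge_pts (E k l)" "q \<in> edge_pts (E i j)" "q \<in> edge_pts (E k l)"
  shows "p = q"
  using assms(1)[unfolded is_flag_def, THEN conjunct2, THEN conjunct2, THEN conjunct2, THEN conjunct2,
      rule_format, of i j k l] assms(2-)
  by blast

lemma flag_edges_cross_at_common_point:
  assumes "is_flag n v E" "1 \<le> i" "i < j" "j \<le> n" "1 \<le> k" "k < l" "l \<le> n"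
    and "{v i, v j} \<inter> {v k, v l} = {}" "p \<in> edge_pts (E i j)" "p \<in> edge_pts (E k l)"
  shows "proper_cross (E i j) (E k l) p"
proof -
  have "(i, j) \<noteq> (k, l)" using assms(8) by auto
  then show ?thesis
    using assms(1)[unfolded is_flag_def, THEN conjunct2, THEN conjunct2, THEN conjunct2, THEN conjunct2,
        rule_format, of i j k l] assms(2-)
    by blast
qed

lemma flag_edge_wrapping:
  assumes flag: "is_flag n v E" and ij: "1 \<le> i" "i < j" "j \<le> n"
  shows "wrapping_edge (E i j) (fst (v i)) (fst (v j))"
    and "unrolled (E i j) (fst (v j)) = snd (v j)"
    and "unrolled (E i j) (fst (v i) + 1) = snd (v i)"
proof -
  let ?lo = "e_lo (E i j)" and ?hi = "e_hi (E i j)" and ?g = "e_fun (E i j)"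
  have xs: "0 < fst (v i)" "fst (v i) < fst (v j)" "fst (v j) < 1"
    using flag_x_range[OF flag] flag_x_strict_mono[OF flag ij] ij by auto
  have arc: "monotone_arc (E i j) (v i) (v j)" and "meets_zero_line (E i j)"
    using flag_edge_arc[OF flag ij] by auto
  then obtain k :: int where k: "?lo < of_int k" "of_int k < ?hi"
    unfolding meets_zero_line_def by blast
  have len: "?hi - ?lo < 1" and cont: "continuous_on {?lo..?hi} ?g"
    and ends: "{(frac ?lo, ?g ?lo), (frac ?hi, ?g ?hi)} = {v i, v j}"
    using arc unfolding monotone_arc_def by auto
  have "\<lfloor>?lo\<rfloor> = k - 1" "\<lfloor>?hi\<rfloor> = k" using k len by (auto intro!: floor_unique)
  then have frac_lo: "frac ?lo = ?lo - of_int k + 1" and frac_hi: "frac ?hi = ?hi - of_int k"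
    by (simp_all add: frac_def)
  \<comment> \<open>the parameter interval contains an integer, so the start point is the one further right\<close>
  have "frac ?hi < frac ?lo" using frac_lo frac_hi len by simp
  then have "(frac ?lo, ?g ?lo) = v j \<and> (frac ?hi, ?g ?hi) = v i"
    using ends xs by (auto simp: doubleton_eq_iff prod_eq_iff)
  then have v: "frac ?lo = fst (v j)" "?g ?lo = snd (v j)" "frac ?hi = fst (v i)" "?g ?hi = snd (v i)"
    by (auto simp: prod_eq_iff)
  have lo: "?lo = of_int \<lfloor>?lo\<rfloor> + fst (v j)" and hi: "?hi = of_int \<lfloor>?lo\<rfloor> + fst (v i) + 1"
    using v \<open>\<lfloor>?lo\<rfloor> = k - 1\<close> frac_hi by (simp_all add: frac_def)
  show "wrapping_edge (E i j) (fst (v i)) (fst (v j))"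
    using v(1) hi cont xs by unfold_locales auto
  show "unrolled (E i j) (fst (v j)) = snd (v j)"
    using v lo by (simp add: unrolled_def add.commute)
  have "fst (v i) + 1 + of_int \<lfloor>?lo\<rfloor> = ?hi" using hi by simp
  then show "unrolled (E i j) (fst (v i) + 1) = snd (v i)"
    using v by (simp add: unrolled_def)
qed

locale flag_quadruple =
  fixes n :: nat and v :: "nat \<Rightarrow> point" and E :: "nat \<Rightarrow> nat \<Rightarrow> edge" and i1 i2 i3 i4 :: nat
  assumes flag: "is_flag n v E" and idx: "0 < i1" "i1 < i2" "i2 < i3" "i3 < i4" "i4 \<le> n"
begin

abbreviation "e \<equiv> E i1 i2"
abbreviation "f \<equiv> E i3 i4"
abbreviation "g \<equiv> E i2 i3"
definition "x1 = fst (v i1)"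
definition "x2 = fst (v i2)"
definition "x3 = fst (v i3)"
definition "x4 = fst (v i4)"

lemma x_order: "0 < x1" "x1 < x2" "x2 < x3" "x3 < x4" "x4 < 1"
  using flag_x_range[OF flag, of i1] flag_x_range[OF flag, of i4] idx
    flag_x_strict_mono[OF flag, of i1 i2] flag_x_strict_mono[OF flag, of i2 i3]
    flag_x_strict_mono[OF flag, of i3 i4]
  by (auto simp: x1_def x2_def x3_def x4_def)

lemma frac_x: "frac x1 = x1" "frac x2 = x2" "frac x3 = x3" "frac x4 = x4"
  using x_order by (simp_all add: frac_eq)

lemma idx_bounds: "1 \<le> i1" "1 \<le> i2" "1 \<le> i3" "i2 \<le> n" "i3 \<le> n"
  using idx by auto

sublocale e: wrapping_edge e x1 x2
  using flag_edge_wrapping(1)[OF flag idx_bounds(1) idx(2) idx_bounds(4)] by (simp add: x1_def x2_def)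

sublocale f: wrapping_edge f x3 x4
  using flag_edge_wrapping(1)[OF flag idx_bounds(3) idx(4,5)] by (simp add: x3_def x4_def)

sublocale g: wrapping_edge g x2 x3
  using flag_edge_wrapping(1)[OF flag idx_bounds(2) idx(3) idx_bounds(5)] by (simp add: x2_def x3_def)

lemma vertex_points:
  "v i1 = (x1, unrolled e (x1 + 1))" "v i2 = (x2, unrolled e x2)"
  "v i3 = (x3, unrolled f (x3 + 1))" "v i4 = (x4, unrolled f x4)"
  using flag_edge_wrapping(2,3)[OF flag idx_bounds(1) idx(2) idx_bounds(4)]
    flag_edge_wrapping(2,3)[OF flag idx_bounds(3) idx(4,5)]
  by (simp_all add: prod_eq_iff x1_def x2_def x3_def x4_def)

lemma g_ends: "unrolled g x3 = unrolled f (x3 + 1)" "unrolled g (x2 + 1) = unrolled e x2"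
  using flag_edge_wrapping(2,3)[OF flag idx_bounds(2) idx(3) idx_bounds(5), folded x2_def x3_def]
  by (simp_all add: vertex_points)

lemma vertices_off_edges:
  "v i1 \<notin> edge_pts f" "v i2 \<notin> edge_pts f" "v i3 \<notin> edge_pts e" "v i4 \<notin> edge_pts e"
  using flag_vertex_not_on_edge[OF flag idx_bounds(3) idx(4,5), of i1]
    flag_vertex_not_on_edge[OF flag idx_bounds(3) idx(4,5), of i2]
    flag_vertex_not_on_edge[OF flag idx_bounds(1) idx(2) idx_bounds(4), of i3]
    flag_vertex_not_on_edge[OF flag idx_bounds(1) idx(2) idx_bounds(4), of i4] idx
  by auto

lemma endpoints_separate:
  "unrolled f x4 \<noteq> unrolled e x4" "unrolled f (x1 + 1) \<noteq> unrolled e (x1 + 1)"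
  "unrolled f (x2 + 1) \<noteq> unrolled e x2" "unrolled f (x3 + 1) \<noteq> unrolled e x3"
proof -
  have "(x4, unrolled e x4) \<in> edge_pts e" "(x3, unrolled e x3) \<in> edge_pts e"
    "(x1, unrolled f (x1 + 1)) \<in> edge_pts f" "(x2, unrolled f (x2 + 1)) \<in> edge_pts f"
    using e.param_in_edge_pts[of x4] e.param_in_edge_pts[of x3] f.param_in_edge_pts[of "x1 + 1"]
      f.param_in_edge_pts[of "x2 + 1"] x_order
    by (simp_all add: frac_x frac_1_eq)
  then show "unrolled f x4 \<noteq> unrolled e x4" "unrolled f (x1 + 1) \<noteq> unrolled e (x1 + 1)"
    "unrolled f (x2 + 1) \<noteq> unrolled e x2" "unrolled f (x3 + 1) \<noteq> unrolled e x3"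
    using vertices_off_edges by (auto simp: vertex_points)
qed

text \<open>
  Common points of e and f, located by the unrolled parameter s of e: around l_{x=0} the
  parameters of e and f agree, while between v_2 and v_3 the parameter of f is s + 1.
\<close>
definition meet_wrap :: "real \<Rightarrow> bool" where
  "meet_wrap s \<longleftrightarrow> s \<in> {x4..x1+1} \<and> unrolled f s = unrolled e s"

definition meet_mid :: "real \<Rightarrow> bool" where
  "meet_mid s \<longleftrightarrow> s \<in> {x2..x3} \<and> unrolled f (s + 1) = unrolled e s"

lemma meet_range: "meet_wrap s \<or> meet_mid s \<Longrightarrow> s \<in> {x2..x1+1}"
  using x_order by (auto simp: meet_wrap_def meet_mid_def)

lemma meet_common_point:
  assumes "meet_wrap s \<or> meet_mid s"
  shows "(frac s, unrolled e s) \<in> edge_pts e" "(frac s, unrolled e s) \<in> edge_pts f"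
proof -
  show "(frac s, unrolled e s) \<in> edge_pts e" using e.param_in_edge_pts meet_range[OF assms] .
  show "(frac s, unrolled e s) \<in> edge_pts f"
    using assms
  proof
    assume "meet_wrap s"
    then have "s \<in> {x4..x3+1}" "unrolled f s = unrolled e s" using x_order by (auto simp: meet_wrap_def)
    then show ?thesis using f.param_in_edge_pts[of s] by simp
  next
    assume "meet_mid s"
    then have "s + 1 \<in> {x4..x3+1}" "unrolled f (s + 1) = unrolled e s"
      using x_order by (auto simp: meet_mid_def)
    then show ?thesis using f.param_in_edge_pts[of "s + 1"] by (simp add: frac_1_eq)
  qed
qed

lemma common_point_meet:
  assumes "p \<in> edge_pts e" "p \<in> edge_pts f"
  obtains s where "meet_wrap s \<or> meet_mid s" "p = (frac s, unrolled e s)"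
proof -
  obtain s where s: "s \<in> {x2..x1+1}" "p = (frac s, unrolled e s)"
    using assms(1) unfolding e.edge_pts_iff by blast
  obtain t where t: "t \<in> {x4..x3+1}" "p = (frac t, unrolled f t)"
    using assms(2) unfolding f.edge_pts_iff by blast
  have "frac t = frac s" and ft: "unrolled f t = unrolled e s" using s(2) t(2) by simp_all
  then obtain k where k: "t = s + of_int k" by (elim frac_eqE)
  have "x2 \<le> s" "s \<le> x1 + 1" "x4 \<le> t" "t \<le> x3 + 1" using s(1) t(1) by auto
  then have "k = 0 \<or> k = 1" using k x_order by linarith
  then have "meet_wrap s \<or> meet_mid s"
  proof
    assume "k = 0"
    then show ?thesis using k s(1) t(1) ft by (simp add: meet_wrap_def)
  next
    assume "k = 1"
    then show ?thesis using k s(1) t(1) ft x_order by (simp add: meet_mid_def)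
  qed
  with s(2) that show ?thesis by blast
qed

lemma meet_unique:
  assumes "meet_wrap s \<or> meet_mid s" "meet_wrap s' \<or> meet_mid s'"
  shows "s = s'"
proof (rule frac_eq_close_imp_eq)
  have "(frac s, unrolled e s) = (frac s', unrolled e s')"
    using flag_edges_meet_at_most_once[OF flag idx_bounds(1) idx(2) idx_bounds(4,3) idx(4,5) _
        meet_common_point[OF assms(1)] meet_common_point[OF assms(2)]] idx
    by simp
  then show "frac s = frac s'" by simp
  show "\<bar>s - s'\<bar> < 1" using meet_range[OF assms(1)] meet_range[OF assms(2)] x_order by auto
qed

lemma meet_proper_cross:
  assumes "meet_wrap s \<or> meet_mid s"
  shows "proper_cross e f (frac s, unrolled e s)"
proof (rule flag_edges_cross_at_common_point[OF flag idx_bounds(1) idx(2) idx_bounds(4,3) idx(4,5)])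
  show "{v i1, v i2} \<inter> {v i3, v i4} = {}"
    using x_order by (auto simp: vertex_points)
qed (use meet_common_point[OF assms] in auto)

lemma meet_wrap_crosses: "meet_wrap s \<Longrightarrow> crosses_zero_at (\<lambda>t. unrolled f t - unrolled e t) s"
proof -
  assume meet: "meet_wrap s"
  then have "s \<noteq> x4" "s \<noteq> x1 + 1" using endpoints_separate(1,2) unfolding meet_wrap_def by metis+
  with meet have s: "x4 < s" "s < x1 + 1" by (auto simp: meet_wrap_def)
  have near: "edge_y e t = unrolled e t \<and> edge_y f t = unrolled f t"
    if "s - min (s - x4) (x1 + 1 - s) < t" "t < s + min (s - x4) (x1 + 1 - s)" for t
  proof -
    have "x4 < t" "t < x1 + 1" using that by linarith+
    then show ?thesis using e.edge_y_eq[of t t] f.edge_y_eq[of t t] x_order by auto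
  qed
  show ?thesis
    by (rule proper_cross_crosses_zero_at[OF meet_proper_cross[of s] _ _ near]) (use meet s in auto)
qed

lemma meet_mid_crosses: "meet_mid s \<Longrightarrow> crosses_zero_at (\<lambda>t. unrolled f (t + 1) - unrolled e t) s"
proof -
  assume meet: "meet_mid s"
  then have "s \<noteq> x2" "s \<noteq> x3" using endpoints_separate(3,4) unfolding meet_mid_def by metis+
  with meet have s: "x2 < s" "s < x3" by (auto simp: meet_mid_def)
  have near: "edge_y e t = unrolled e t \<and> edge_y f t = unrolled f (t + 1)"
    if "s - min (s - x2) (x3 - s) < t" "t < s + min (s - x2) (x3 - s)" for t
  proof -
    have "x2 < t" "t < x3" using that by linarith+
    then show ?thesis using e.edge_y_eq[of t t] f.edge_y_eq[of "t + 1" t] x_order by (auto simp: frac_1_eq)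
  qed
  show ?thesis
    by (rule proper_cross_crosses_zero_at[OF meet_proper_cross[of s] _ _ near]) (use meet s in auto)
qed

lemma g_avoids_e: "\<forall>s\<in>{x3..x1+1}. unrolled g s \<noteq> unrolled e s"
proof (intro ballI notI)
  fix s assume s: "s \<in> {x3..x1+1}" and meet: "unrolled g s = unrolled e s"
  have on_e: "(frac s, unrolled e s) \<in> edge_pts e" and on_g: "(frac s, unrolled e s) \<in> edge_pts g"
    using e.param_in_edge_pts[of s] g.param_in_edge_pts[of s] s meet x_order by auto
  have v_e: "v i2 \<in> edge_pts e" and v_g: "v i2 \<in> edge_pts g"
    using e.param_in_edge_pts[of x2] g.param_in_edge_pts[of "x2 + 1"] x_order
    by (auto simp: vertex_points g_ends frac_x frac_1_eq)
  have "(frac s, unrolled e s) = v i2"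
    using flag_edges_meet_at_most_once[OF flag idx_bounds(1) idx(2) idx_bounds(4,2) idx(3) idx_bounds(5)
        _ on_e on_g v_e v_g] idx
    by simp
  then have "frac s = frac x2" by (simp add: vertex_points frac_x)
  then have "s = x2" by (rule frac_eq_close_imp_eq) (use s x_order in auto)
  then show False using s x_order by auto
qed

lemma g_avoids_f: "\<forall>s\<in>{x4..x2+1}. unrolled g s \<noteq> unrolled f s"
proof (intro ballI notI)
  fix s assume s: "s \<in> {x4..x2+1}" and meet: "unrolled g s = unrolled f s"
  have on_g: "(frac s, unrolled g s) \<in> edge_pts g" and on_f: "(frac s, unrolled g s) \<in> edge_pts f"
    using g.param_in_edge_pts[of s] f.param_in_edge_pts[of s] s meet x_order by auto
  have v_g: "v i3 \<in> edge_pts g" and v_f: "v i3 \<in> edge_pts f"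
    using g.param_in_edge_pts[of x3] f.param_in_edge_pts[of "x3 + 1"] x_order
    by (auto simp: vertex_points g_ends frac_x frac_1_eq)
  have "(frac s, unrolled g s) = v i3"
    using flag_edges_meet_at_most_once[OF flag idx_bounds(2) idx(3) idx_bounds(5,3) idx(4,5)
        _ on_g on_f v_g v_f] idx
    by simp
  then have "frac s = frac x3" by (simp add: vertex_points frac_x)
  then have "s = x3" by (rule frac_eq_close_imp_eq) (use s x_order in auto)
  then show False using s x_order by auto
qed

lemma frac_meet_wrap: "meet_wrap s \<Longrightarrow> frac s \<le> x1 \<or> x4 \<le> frac s"
proof -
  assume "meet_wrap s"
  then have s: "x4 \<le> s" "s \<le> x1 + 1" by (auto simp: meet_wrap_def)
  show ?thesis
  proof (cases "s < 1")
    case True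
    then show ?thesis using s x_order by (simp add: frac_eq)
  next
    case False
    then have "frac s = s - 1" using s x_order by (subst frac_unique_iff) auto
    then show ?thesis using s by simp
  qed
qed

lemma frac_meet_mid: "meet_mid s \<Longrightarrow> frac s = s"
  using x_order by (auto simp: meet_mid_def frac_eq)

lemma edges_cross_iff_meet: "edges_cross e f \<longleftrightarrow> (\<exists>s. meet_wrap s \<or> meet_mid s)"
proof
  assume "edges_cross e f"
  then obtain p where "proper_cross e f p" unfolding edges_cross_def by blast
  then have "p \<in> edge_relint e" "p \<in> edge_relint f" unfolding proper_cross_def by blast+
  then have "p \<in> edge_pts e" "p \<in> edge_pts f" using edge_relint_subset by blast+
  then show "\<exists>s. meet_wrap s \<or> meet_mid s" by (metis common_point_meet)
qed (use meet_proper_cross edges_cross_def in blast)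

lemma edges_disjoint_iff_no_meet: "edges_disjoint e f \<longleftrightarrow> \<not> (\<exists>s. meet_wrap s \<or> meet_mid s)"
  unfolding edges_disjoint_def by (metis disjoint_iff common_point_meet meet_common_point)

lemma curves_cross_iff_meet_mid:
  "curves_cross (plus_part e (v i2)) (minus_part f (v i3)) \<longleftrightarrow> (\<exists>s. meet_mid s)"
proof
  assume "curves_cross (plus_part e (v i2)) (minus_part f (v i3))"
  then obtain p where p: "p \<in> edge_pts e" "p \<in> edge_pts f" "x2 < fst p" "fst p < x3"
    unfolding curves_cross_def curve_pts_def plus_part_def minus_part_def by (auto simp: vertex_points)
  obtain s where "meet_wrap s \<or> meet_mid s" "p = (frac s, unrolled e s)"
    by (rule common_point_meet[OF p(1,2)])
  then show "\<exists>s. meet_mid s" using frac_meet_wrap p x_order by force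
next
  assume "\<exists>s. meet_mid s"
  then obtain s where meet: "meet_mid s" by blast
  then have "s \<noteq> x2" "s \<noteq> x3" using endpoints_separate(3,4) unfolding meet_mid_def by metis+
  moreover have "(s, unrolled e s) \<in> edge_pts e" "(s, unrolled e s) \<in> edge_pts f"
    "proper_cross e f (s, unrolled e s)"
    using meet_common_point[of s] meet_proper_cross[of s] meet frac_meet_mid[OF meet] by auto
  ultimately show "curves_cross (plus_part e (v i2)) (minus_part f (v i3))"
    unfolding curves_cross_def curve_pts_def plus_part_def minus_part_def using meet x_order
    by (intro exI[of _ "(s, unrolled e s)"]) (auto simp: meet_mid_def vertex_points)
qed

lemma edge_y_left_of_x1:
  "0 < x \<Longrightarrow> x < x1 \<Longrightarrow> edge_y e x = unrolled e (x + 1) \<and> edge_y f x = unrolled f (x + 1)"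
  using e.edge_y_eq[of "x + 1" x] f.edge_y_eq[of "x + 1" x] x_order by (auto simp: frac_1_eq)

lemma common_points_right_of_x1:
  assumes "\<forall>s. \<not> meet_wrap s" "p \<in> edge_pts e" "p \<in> edge_pts f"
  shows "x1 \<le> fst p"
proof -
  obtain s where "meet_wrap s \<or> meet_mid s" "p = (frac s, unrolled e s)"
    using common_point_meet assms(2,3) by blast
  with assms(1) have "meet_mid s" "p = (frac s, unrolled e s)" by auto
  then show ?thesis using frac_meet_mid x_order by (auto simp: meet_mid_def)
qed

lemma minus_part_f_prec_e:
  assumes "\<forall>s\<in>{x4..x1+1}. unrolled f s < unrolled e s"
  shows "curve_prec (minus_part f (v i3)) (minus_part e (v i1))"
proof -
  have "\<forall>s. \<not> meet_wrap s" using assms unfolding meet_wrap_def by fastforce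
  moreover have "x1 / 2 \<in> {0<..<x3} \<inter> {0<..<x1}" using x_order by auto
  moreover have "\<forall>x\<in>{0<..<x3} \<inter> {0<..<x1}. edge_y f x < edge_y e x"
    using edge_y_left_of_x1 assms x_order by auto
  ultimately show ?thesis
    unfolding curve_prec_def curves_related_def curves_cross_def curve_rixs_def curve_pts_def minus_part_def
    using common_points_right_of_x1 by (force simp: less_imp_le vertex_points)
qed

lemma minus_part_e_prec_f:
  assumes "\<forall>s\<in>{x4..x1+1}. unrolled e s < unrolled f s"
  shows "curve_prec (minus_part e (v i1)) (minus_part f (v i3))"
proof -
  have "\<forall>s. \<not> meet_wrap s" using assms unfolding meet_wrap_def by fastforce
  moreover have "x1 / 2 \<in> {0<..<x1} \<inter> {0<..<x3}" using x_order by auto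
  moreover have "\<forall>x\<in>{0<..<x1} \<inter> {0<..<x3}. edge_y e x < edge_y f x"
    using edge_y_left_of_x1 assms x_order by auto
  ultimately show ?thesis
    unfolding curve_prec_def curves_related_def curves_cross_def curve_rixs_def curve_pts_def minus_part_def
    using common_points_right_of_x1 by (force simp: less_imp_le vertex_points)
qed

lemma vertex_positions:
  "pt_below (v i3) e \<longleftrightarrow> unrolled f (x3 + 1) < unrolled e x3"
  "pt_above (v i3) e \<longleftrightarrow> unrolled e x3 < unrolled f (x3 + 1)"
  "pt_below (v i4) e \<longleftrightarrow> unrolled f x4 < unrolled e x4"
  "pt_above (v i4) e \<longleftrightarrow> unrolled e x4 < unrolled f x4"
  "pt_below (v i1) f \<longleftrightarrow> unrolled e (x1 + 1) < unrolled f (x1 + 1)"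
  "pt_above (v i1) f \<longleftrightarrow> unrolled f (x1 + 1) < unrolled e (x1 + 1)"
  "pt_below (v i2) f \<longleftrightarrow> unrolled e x2 < unrolled f (x2 + 1)"
  "pt_above (v i2) f \<longleftrightarrow> unrolled f (x2 + 1) < unrolled e x2"
  using e.pt_below_iff[of x3 "v i3"] e.pt_above_iff[of x3 "v i3"]
    e.pt_below_iff[of x4 "v i4"] e.pt_above_iff[of x4 "v i4"]
    f.pt_below_iff[of "x1 + 1" "v i1"] f.pt_above_iff[of "x1 + 1" "v i1"]
    f.pt_below_iff[of "x2 + 1" "v i2"] f.pt_above_iff[of "x2 + 1" "v i2"] x_order
  by (simp_all add: vertex_points frac_x frac_1_eq)

lemma signed_order:
  fixes c :: real
  assumes "c \<noteq> 0"
    and below: "c * unrolled f x4 < c * unrolled e x4" "c * unrolled f (x3 + 1) < c * unrolled e x3"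
  shows "\<forall>s\<in>{x4..x1+1}. c * unrolled f s < c * unrolled e s"
    and "(\<exists>s. meet_mid s) \<longleftrightarrow> c * unrolled e x2 < c * unrolled f (x2 + 1)"
proof -
  have meet_iff: "s \<in> {x4..x1+1} \<and> c * unrolled f s = c * unrolled e s \<or>
      s \<in> {x2..x3} \<and> c * unrolled f (s + 1) = c * unrolled e s \<longleftrightarrow> meet_wrap s \<or> meet_mid s" for s
    using \<open>c \<noteq> 0\<close> by (auto simp: meet_wrap_def meet_mid_def)
  have crosses: "crosses_zero_at (\<lambda>t. c * F t - c * G t) s \<longleftrightarrow> crosses_zero_at (\<lambda>t. F t - G t) s"
    for F G :: "real \<Rightarrow> real" and s
    using crosses_zero_at_scale[OF \<open>c \<noteq> 0\<close>, of "\<lambda>t. F t - G t"] by (simp add: right_diff_distrib)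
  have x: "x1 < x2" "x2 < x3" "x3 < x4" "x4 < x1 + 1" using x_order by auto
  have cont: "continuous_on {x2..x1+1} (\<lambda>s. c * unrolled e s)"
    "continuous_on {x4..x3+1} (\<lambda>s. c * unrolled f s)" "continuous_on {x3..x2+1} (\<lambda>s. c * unrolled g s)"
    by (intro continuous_on_mult_left e.continuous_unrolled f.continuous_unrolled g.continuous_unrolled)+
  have unique: "s = s'" if "s \<in> {x4..x1+1} \<and> c * unrolled f s = c * unrolled e s \<or>
      s \<in> {x2..x3} \<and> c * unrolled f (s + 1) = c * unrolled e s"
    and "s' \<in> {x4..x1+1} \<and> c * unrolled f s' = c * unrolled e s' \<or>
      s' \<in> {x2..x3} \<and> c * unrolled f (s' + 1) = c * unrolled e s'" for s s'
    using meet_unique that unfolding meet_iff by blast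
  have cross_wrap: "crosses_zero_at (\<lambda>t. c * unrolled f t - c * unrolled e t) s"
    if "s \<in> {x4..x1+1}" "c * unrolled f s = c * unrolled e s" for s
    using meet_wrap_crosses[of s] that \<open>c \<noteq> 0\<close> by (simp add: crosses meet_wrap_def)
  have cross_mid: "crosses_zero_at (\<lambda>t. c * unrolled f (t + 1) - c * unrolled e t) s"
    if "s \<in> {x2..x3}" "c * unrolled f (s + 1) = c * unrolled e s" for s
    using meet_mid_crosses[of s] that \<open>c \<noteq> 0\<close> by (simp add: crosses meet_mid_def)
  have scaled:
    "c * unrolled f x4 \<noteq> c * unrolled e x4" "c * unrolled f (x1 + 1) \<noteq> c * unrolled e (x1 + 1)"
    "c * unrolled f (x2 + 1) \<noteq> c * unrolled e x2" "c * unrolled f (x3 + 1) \<noteq> c * unrolled e x3"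
    "c * unrolled g x3 = c * unrolled f (x3 + 1)" "c * unrolled g (x2 + 1) = c * unrolled e x2"
    "\<forall>s\<in>{x3..x1+1}. c * unrolled g s \<noteq> c * unrolled e s"
    "\<forall>s\<in>{x4..x2+1}. c * unrolled g s \<noteq> c * unrolled f s"
    using endpoints_separate g_ends g_avoids_e g_avoids_f \<open>c \<noteq> 0\<close> by simp_all
  note order = wrapped_arcs_order[of x1 x2 x3 x4 "\<lambda>s. c * unrolled e s" "\<lambda>s. c * unrolled f s"
      "\<lambda>s. c * unrolled g s", OF x cont unique cross_wrap cross_mid scaled below]
  show "\<forall>s\<in>{x4..x1+1}. c * unrolled f s < c * unrolled e s" by (rule order(1))
  show "(\<exists>s. meet_mid s) \<longleftrightarrow> c * unrolled e x2 < c * unrolled f (x2 + 1)"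
    using order(2) \<open>c \<noteq> 0\<close> by (auto simp: meet_mid_def)
qed

lemma below_case:
  assumes "pt_below (v i3) e" "pt_below (v i4) e"
  shows "(edges_cross e f \<longleftrightarrow> curves_cross (plus_part e (v i2)) (minus_part f (v i3))) \<and>
      (curves_cross (plus_part e (v i2)) (minus_part f (v i3)) \<longleftrightarrow>
         pt_below (v i2) f \<and> pt_above (v i1) f \<and> curve_prec (minus_part f (v i3)) (minus_part e (v i1))) \<and>
      (edges_disjoint e f \<longleftrightarrow> pt_above (v i1) f \<and> pt_above (v i2) f)"
proof -
  have "unrolled f x4 < unrolled e x4" "unrolled f (x3 + 1) < unrolled e x3"
    using assms vertex_positions by auto
  then have f_below_e: "\<forall>s\<in>{x4..x1+1}. unrolled f s < unrolled e s"
    and meet_mid_iff: "(\<exists>s. meet_mid s) \<longleftrightarrow> unrolled e x2 < unrolled f (x2 + 1)"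
    using signed_order[of 1] by auto
  have "\<not> meet_wrap s" for s using f_below_e[rule_format, of s] by (auto simp: meet_wrap_def)
  moreover have "pt_above (v i1) f" using f_below_e x_order vertex_positions(6) by auto
  moreover note minus_part_f_prec_e[OF f_below_e]
  ultimately show ?thesis
    unfolding edges_cross_iff_meet edges_disjoint_iff_no_meet curves_cross_iff_meet_mid
      vertex_positions(7,8)
    using meet_mid_iff endpoints_separate(3) by auto
qed

lemma above_case:
  assumes "pt_above (v i3) e" "pt_above (v i4) e"
  shows "(edges_cross e f \<longleftrightarrow> curves_cross (plus_part e (v i2)) (minus_part f (v i3))) \<and>
      (curves_cross (plus_part e (v i2)) (minus_part f (v i3)) \<longleftrightarrow>
         pt_above (v i2) f \<and> pt_below (v i1) f \<and> curve_prec (minus_part e (v i1)) (minus_part f (v i3))) \<and>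
      (edges_disjoint e f \<longleftrightarrow> pt_below (v i1) f \<and> pt_below (v i2) f)"
proof -
  have "- unrolled f x4 < - unrolled e x4" "- unrolled f (x3 + 1) < - unrolled e x3"
    using assms vertex_positions by auto
  then have e_below_f: "\<forall>s\<in>{x4..x1+1}. unrolled e s < unrolled f s"
    and meet_mid_iff: "(\<exists>s. meet_mid s) \<longleftrightarrow> unrolled f (x2 + 1) < unrolled e x2"
    using signed_order[of "-1"] by auto
  have "\<not> meet_wrap s" for s using e_below_f[rule_format, of s] by (auto simp: meet_wrap_def)
  moreover have "pt_below (v i1) f" using e_below_f x_order vertex_positions(5) by auto
  moreover note minus_part_e_prec_f[OF e_below_f]
  ultimately show ?thesis
    unfolding edges_cross_iff_meet edges_disjoint_iff_no_meet curves_cross_iff_meet_mid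
      vertex_positions(7,8)
    using meet_mid_iff endpoints_separate(3) by auto
qed

end

theorem claim12:
  fixes n :: nat and v :: "nat \<Rightarrow> point" and E :: "nat \<Rightarrow> nat \<Rightarrow> edge"
    and i1 i2 i3 i4 :: nat
  assumes flag: "is_flag n v E"
    and idx: "0 < i1" "i1 < i2" "i2 < i3" "i3 < i4" "i4 \<le> n"
  shows
   "(pt_below (v i3) (E i1 i2) \<and> pt_below (v i4) (E i1 i2) \<longrightarrow>
      (edges_cross (E i1 i2) (E i3 i4) \<longleftrightarrow>
         curves_cross (plus_part (E i1 i2) (v i2)) (minus_part (E i3 i4) (v i3))) \<and>
      (curves_cross (plus_part (E i1 i2) (v i2)) (minus_part (E i3 i4) (v i3)) \<longleftrightarrow>
         pt_below (v i2) (E i3 i4) \<and> pt_above (v i1) (E i3 i4) \<and>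
         curve_prec (minus_part (E i3 i4) (v i3)) (minus_part (E i1 i2) (v i1))) \<and>
      (edges_disjoint (E i1 i2) (E i3 i4) \<longleftrightarrow>
         pt_above (v i1) (E i3 i4) \<and> pt_above (v i2) (E i3 i4)))
    \<and>
    (pt_above (v i3) (E i1 i2) \<and> pt_above (v i4) (E i1 i2) \<longrightarrow>
      (edges_cross (E i1 i2) (E i3 i4) \<longleftrightarrow>
         curves_cross (plus_part (E i1 i2) (v i2)) (minus_part (E i3 i4) (v i3))) \<and>
      (curves_cross (plus_part (E i1 i2) (v i2)) (minus_part (E i3 i4) (v i3)) \<longleftrightarrow>
         pt_above (v i2) (E i3 i4) \<and> pt_below (v i1) (E i3 i4) \<and>
         curve_prec (minus_part (E i1 i2) (v i1)) (minus_part (E i3 i4) (v i3))) \<and>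
      (edges_disjoint (E i1 i2) (E i3 i4) \<longleftrightarrow>
         pt_below (v i1) (E i3 i4) \<and> pt_below (v i2) (E i3 i4)))"
proof -
  interpret flag_quadruple n v E i1 i2 i3 i4
    using flag idx by unfold_locales
  show ?thesis using below_case above_case by blast
qed

end
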